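(* Let $M\in\mathrm{M}_n(\mathbb{K})$ be a cyclic matrix with minimal polynomial $f\in\mathbb{K}[x]$, and let $\mathcal{C}\subseteq\mathbb{L}^n$ be an $M$-cyclic code with generator polynomial $g\in\mathbb{L}[x]$; write $f=gh$. Then $\mathcal{C}^\perp$ is an $M^t$-cyclic code (with $M^t$ cyclic with minimal polynomial $f$), and its generator polynomial is $h$.
   Context: Let $\mathbb{L}/\mathbb{K}$ be a field extension of finite degree $m\ge n$. Vectors are row vectors; $\mathcal{C}^\perp=\{c'\in\mathbb{L}^n:\sum_jc'_jc_j=0\ \forall c\in\mathcal{C}\}$. A matrix $A\in\mathrm{M}_n(\mathbb{K})$ is cyclic if there is $v\in\mathbb{K}^n$ (a cyclic vector) with $(v,vA^t,\dots,v(A^t)^{n-1})$ a basis; equivalently its minimal polynomial $f$ has degree $n$. An $A$-cyclic code is an $\mathbb{L}$-subspace $\mathcal{C}\subseteq\mathbb{L}^n$ with $cA^t\in\mathcal{C}$ for all $c\in\mathcal{C}$. For a monic divisor $g$ of $f$ in $\mathbb{L}[x]$, $\mathcal{C}_g=\{v\,g(A)^tP(A)^t:P\in\mathbb{L}[x]\}$ (independent of the cyclic vector $v\in\mathbb{K}^n$, of dimension $n-\deg g$); every $A$-cyclic code equals $\mathcal{C}_g$ for a unique monic divisor $g$ of $f$, its generator polynomial. *)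

theory Defs
  imports "Jordan_Normal_Form.Matrix" "HOL-Computational_Algebra.Polynomial"
begin

text \<open>The big field L is the type 'a; the subfield K is a subset of 'a.\<close>

definition subfield :: "'a::field set \<Rightarrow> bool" where
  "subfield K \<longleftrightarrow> 0 \<in> K \<and> 1 \<in> K \<and> (\<forall>x\<in>K. \<forall>y\<in>K. x + y \<in> K \<and> x * y \<in> K)
     \<and> (\<forall>x\<in>K. - x \<in> K) \<and> (\<forall>x\<in>K. inverse x \<in> K)"

definition ext_degree :: "'a::field set \<Rightarrow> nat \<Rightarrow> bool" where
  "ext_degree K m \<longleftrightarrow> (\<exists>b :: nat \<Rightarrow> 'a.
      (\<forall>c. (\<forall>i<m. c i \<in> K) \<longrightarrow> (\<Sum>i<m. c i * b i) = 0 \<longrightarrow> (\<forall>i<m. c i = 0)) \<and>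
      (\<forall>x. \<exists>c. (\<forall>i<m. c i \<in> K) \<and> x = (\<Sum>i<m. c i * b i)))"

definition mat_eval :: "'a::comm_ring_1 poly \<Rightarrow> 'a mat \<Rightarrow> 'a mat" where
  "mat_eval p A = foldr (\<lambda>c B. c \<cdot>\<^sub>m 1\<^sub>m (dim_row A) + A * B) (coeffs p) (0\<^sub>m (dim_row A) (dim_row A))"

definition K_vecs :: "'a set \<Rightarrow> nat \<Rightarrow> 'a vec set" where
  "K_vecs K n = {w \<in> carrier_vec n. \<forall>i<n. w $ i \<in> K}"

definition K_mat :: "'a set \<Rightarrow> 'a mat \<Rightarrow> bool" where
  "K_mat K A \<longleftrightarrow> (\<forall>i<dim_row A. \<forall>j<dim_col A. A $$ (i,j) \<in> K)"

text \<open>Row vector v times A^t is the column vector A *v v; so (v, vA^t, ..., v(A^t)^(n-1))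
  is (A^i *v v) for i < n. It must be a K-basis of K^n.\<close>
definition cyclic_vector :: "'a::field set \<Rightarrow> 'a mat \<Rightarrow> 'a vec \<Rightarrow> bool" where
  "cyclic_vector K A v \<longleftrightarrow> (let n = dim_row A in v \<in> K_vecs K n \<and>
     (\<forall>c. (\<forall>i<n. c i \<in> K) \<longrightarrow> finsum_vec TYPE('a) n (\<lambda>i. c i \<cdot>\<^sub>v ((A ^\<^sub>m i) *\<^sub>v v)) {..<n} = 0\<^sub>v n
           \<longrightarrow> (\<forall>i<n. c i = 0)) \<and>
     (\<forall>w\<in>K_vecs K n. \<exists>c. (\<forall>i<n. c i \<in> K) \<and>
           w = finsum_vec TYPE('a) n (\<lambda>i. c i \<cdot>\<^sub>v ((A ^\<^sub>m i) *\<^sub>v v)) {..<n}))"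

definition cyclic_mat :: "'a::field set \<Rightarrow> 'a mat \<Rightarrow> bool" where
  "cyclic_mat K A \<longleftrightarrow> (\<exists>v. cyclic_vector K A v)"

definition is_min_poly :: "'a::field set \<Rightarrow> 'a mat \<Rightarrow> 'a poly \<Rightarrow> bool" where
  "is_min_poly K A f \<longleftrightarrow> lead_coeff f = 1 \<and> (\<forall>i. coeff f i \<in> K) \<and>
     mat_eval f A = 0\<^sub>m (dim_row A) (dim_row A) \<and>
     (\<forall>q. q \<noteq> 0 \<longrightarrow> (\<forall>i. coeff q i \<in> K) \<longrightarrow> mat_eval q A = 0\<^sub>m (dim_row A) (dim_row A)
          \<longrightarrow> degree f \<le> degree q)"

text \<open>A-cyclic code over L (= the type 'a): L-subspace of L^n stable under c |-> c A^t.\<close>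
definition cyclic_code :: "'a::field mat \<Rightarrow> 'a vec set \<Rightarrow> bool" where
  "cyclic_code A C \<longleftrightarrow> C \<subseteq> carrier_vec (dim_row A) \<and> 0\<^sub>v (dim_row A) \<in> C \<and>
     (\<forall>x\<in>C. \<forall>y\<in>C. x + y \<in> C) \<and> (\<forall>a. \<forall>x\<in>C. a \<cdot>\<^sub>v x \<in> C) \<and>
     (\<forall>c\<in>C. A *\<^sub>v c \<in> C)"

text \<open>C_g = { v g(A)^t P(A)^t : P in L[x] }, written with column vectors.\<close>
definition code_of :: "'a::field mat \<Rightarrow> 'a vec \<Rightarrow> 'a poly \<Rightarrow> 'a vec set" where
  "code_of A v g = {mat_eval P A *\<^sub>v (mat_eval g A *\<^sub>v v) | P. True}"

definition is_gen_poly :: "'a::field set \<Rightarrow> 'a mat \<Rightarrow> 'a poly \<Rightarrow> 'a vec set \<Rightarrow> 'a poly \<Rightarrow> bool" where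
  "is_gen_poly K A f C g \<longleftrightarrow> lead_coeff g = 1 \<and> g dvd f \<and>
     (\<exists>v. cyclic_vector K A v \<and> C = code_of A v g)"

definition dual_code :: "nat \<Rightarrow> 'a::field vec set \<Rightarrow> 'a vec set" where
  "dual_code n C = {c' \<in> carrier_vec n. \<forall>c\<in>C. c' \<bullet> c = 0}"

end

theory Submission
  imports Defs "Jordan_Normal_Form.Determinant"
begin

(* Let v be a cyclic vector of M and w the last row of the inverse of the Krylov matrix
   (v, Mv, ..., M^(n-1) v), so that w . P(M)v is the coefficient of x^(n-1) in P whenever
   deg P < n. As deg f <= n and P(M^t)w . Q(M)v = w . (PQ)(M)v, the pairing
   (P, Q) |-> w . (PQ)(M)v is nondegenerate modulo f: if it vanishes for all Q, then f divides P,
   for otherwise a shift x^k r of the remainder r of P has its leading coefficient in degree n-1.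
   Hence w is a cyclic vector of M^t, and P(M^t)w is orthogonal to C_g = {(Qg)(M)v} iff f divides
   Pg, i.e. iff h divides P. *)

section \<open>Polynomials evaluated at a matrix\<close>

lemma mat_eval_0: "mat_eval 0 A = 0\<^sub>m (dim_row A) (dim_row A)"
  unfolding mat_eval_def by simp

lemma mat_eval_pCons:
  assumes A: "A \<in> carrier_mat n n"
  shows "mat_eval (pCons a p) A = a \<cdot>\<^sub>m 1\<^sub>m n + A * mat_eval p A"
proof (cases "a = 0 \<and> p = 0")
  case True
  have "0 \<cdot>\<^sub>m 1\<^sub>m n + 0\<^sub>m n n = (0\<^sub>m n n :: 'a mat)" by (intro eq_matI) auto
  then show ?thesis using A True by (simp add: mat_eval_0 right_mult_zero_mat)
next
  case False
  then have "coeffs (pCons a p) = a # coeffs p" by (auto simp: cCons_def)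
  then show ?thesis using A unfolding mat_eval_def by simp
qed

lemma mat_eval_carrier: "A \<in> carrier_mat n n \<Longrightarrow> mat_eval p A \<in> carrier_mat n n"
  by (induction p rule: pCons_induct) (auto simp: mat_eval_0 mat_eval_pCons)

lemma mat_eval_add:
  assumes A: "A \<in> carrier_mat n n"
  shows "mat_eval (p + q) A = mat_eval p A + mat_eval q A"
proof (induction p arbitrary: q rule: pCons_induct)
  case 0 then show ?case using A mat_eval_carrier[OF A] by (simp add: mat_eval_0)
next
  case (pCons a p)
  obtain b q' where q: "q = pCons b q'" by (cases q) auto
  note c = mat_eval_carrier[OF A, of p] mat_eval_carrier[OF A, of q']
  have "mat_eval (pCons a p + q) A = (a + b) \<cdot>\<^sub>m 1\<^sub>m n + A * (mat_eval p A + mat_eval q' A)"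
    using pCons(2) q A by (simp add: mat_eval_pCons)
  also have "\<dots> = (a + b) \<cdot>\<^sub>m 1\<^sub>m n + (A * mat_eval p A + A * mat_eval q' A)"
    using mult_add_distrib_mat[OF A c] by simp
  also have "\<dots> = (a \<cdot>\<^sub>m 1\<^sub>m n + A * mat_eval p A) + (b \<cdot>\<^sub>m 1\<^sub>m n + A * mat_eval q' A)"
    using A c by (intro eq_matI) (auto simp: algebra_simps)
  finally show ?case using q A by (simp add: mat_eval_pCons)
qed

lemma mat_eval_smult:
  assumes A: "A \<in> carrier_mat n n"
  shows "mat_eval (smult c p) A = c \<cdot>\<^sub>m mat_eval p A"
proof (induction p rule: pCons_induct)
  case 0 then show ?case using A by (auto simp: mat_eval_0)
next
  case (pCons a p)
  note cp = mat_eval_carrier[OF A, of p]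
  have "mat_eval (smult c (pCons a p)) A = (c * a) \<cdot>\<^sub>m 1\<^sub>m n + A * (c \<cdot>\<^sub>m mat_eval p A)"
    using pCons A by (simp add: mat_eval_pCons)
  also have "\<dots> = (c * a) \<cdot>\<^sub>m 1\<^sub>m n + c \<cdot>\<^sub>m (A * mat_eval p A)"
    using mult_smult_distrib[OF A cp] by simp
  also have "\<dots> = c \<cdot>\<^sub>m (a \<cdot>\<^sub>m 1\<^sub>m n + A * mat_eval p A)"
    using A cp by (intro eq_matI) (auto simp: algebra_simps)
  finally show ?case using A by (simp add: mat_eval_pCons)
qed

lemma mat_eval_mult:
  assumes A: "A \<in> carrier_mat n n"
  shows "mat_eval (p * q) A = mat_eval p A * mat_eval q A"
proof (induction p rule: pCons_induct)
  case 0
  then show ?case using A by (simp add: mat_eval_0 left_mult_zero_mat[OF mat_eval_carrier[OF A]])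
next
  case (pCons a p)
  note cp = mat_eval_carrier[OF A, of p] mat_eval_carrier[OF A, of q]
  have "mat_eval (pCons a p * q) A
      = a \<cdot>\<^sub>m mat_eval q A + (0 \<cdot>\<^sub>m 1\<^sub>m n + A * (mat_eval p A * mat_eval q A))"
    using pCons A by (simp add: mat_eval_add mat_eval_smult mat_eval_pCons)
  also have "\<dots> = a \<cdot>\<^sub>m mat_eval q A + A * mat_eval p A * mat_eval q A"
    using A cp by (intro eq_matI) auto
  also have "\<dots> = (a \<cdot>\<^sub>m 1\<^sub>m n) * mat_eval q A + A * mat_eval p A * mat_eval q A"
    using cp by (simp add: mult_smult_assoc_mat[of _ n n _ n] left_mult_one_mat)
  also have "\<dots> = (a \<cdot>\<^sub>m 1\<^sub>m n + A * mat_eval p A) * mat_eval q A"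
    using A cp by (simp add: add_mult_distrib_mat[of _ n n _ _ n])
  finally show ?case using A by (simp add: mat_eval_pCons)
qed

lemma mat_eval_commute:
  assumes A: "A \<in> carrier_mat n n"
  shows "A * mat_eval p A = mat_eval p A * A"
proof -
  have X: "mat_eval [:0, 1:] A = A"
    using A by (simp add: mat_eval_pCons mat_eval_0) (intro eq_matI, auto)
  show ?thesis
    using mat_eval_mult[OF A, of "[:0, 1:]" p] mat_eval_mult[OF A, of p "[:0, 1:]"]
    by (simp add: X mult.commute)
qed

lemma mat_eval_transpose:
  assumes A: "A \<in> carrier_mat n n"
  shows "mat_eval p (transpose_mat A) = transpose_mat (mat_eval p A)"
proof (induction p rule: pCons_induct)
  case 0 then show ?case using A by (simp add: mat_eval_0)
next
  case (pCons a p)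
  note cp = mat_eval_carrier[OF A, of p]
  have "transpose_mat (mat_eval (pCons a p) A)
      = transpose_mat (a \<cdot>\<^sub>m 1\<^sub>m n) + transpose_mat (mat_eval p A * A)"
    using A cp by (simp add: mat_eval_pCons mat_eval_commute[OF A]
        transpose_add[of "a \<cdot>\<^sub>m 1\<^sub>m n" n n "mat_eval p A * A"])
  also have "\<dots> = a \<cdot>\<^sub>m 1\<^sub>m n + transpose_mat A * transpose_mat (mat_eval p A)"
    using A cp by (simp add: transpose_mult) (intro eq_matI, auto)
  finally show ?case using pCons A by (simp add: mat_eval_pCons)
qed

lemma mat_eval_mult_mult_vec:
  assumes "A \<in> carrier_mat n n" and "x \<in> carrier_vec n"
  shows "mat_eval p A *\<^sub>v (mat_eval q A *\<^sub>v x) = mat_eval (p * q) A *\<^sub>v x"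
  using assoc_mult_mat_vec[OF mat_eval_carrier mat_eval_carrier, OF assms(1,1,2)]
  by (simp add: mat_eval_mult[OF assms(1)])

lemma scalar_prod_mat_eval_transpose:
  assumes "A \<in> carrier_mat n n" and "x \<in> carrier_vec n" and "y \<in> carrier_vec n"
  shows "(mat_eval p (transpose_mat A) *\<^sub>v y) \<bullet> x = y \<bullet> (mat_eval p A *\<^sub>v x)"
  unfolding mat_eval_transpose[OF assms(1)]
  using transpose_vec_mult_scalar[OF mat_eval_carrier[OF assms(1)] assms(2,3)] .

lemma mat_eval_mod:
  assumes A: "A \<in> carrier_mat n n" and f: "mat_eval f A = 0\<^sub>m n n"
  shows "mat_eval (p mod f) A = mat_eval p A"
proof -
  have "mat_eval p A = mat_eval (p div f) A * mat_eval f A + mat_eval (p mod f) A"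
    by (metis div_mult_mod_eq mat_eval_add[OF A] mat_eval_mult[OF A])
  then show ?thesis
    by (simp add: f right_mult_zero_mat[OF mat_eval_carrier[OF A]] left_add_zero_mat[OF mat_eval_carrier[OF A]])
qed

lemma mat_eval_mult_vec_index:
  assumes A: "A \<in> carrier_mat n n"
  shows "v \<in> carrier_vec n \<Longrightarrow> (\<And>j. N \<le> j \<Longrightarrow> coeff p j = 0) \<Longrightarrow> k < n \<Longrightarrow>
    (mat_eval p A *\<^sub>v v) $ k = (\<Sum>j<N. coeff p j * (A ^\<^sub>m j *\<^sub>v v) $ k)"
proof (induction p arbitrary: v N rule: pCons_induct)
  case 0 then show ?case using A by (simp add: mat_eval_0)
next
  case (pCons a p)
  note cp = mat_eval_carrier[OF A, of p]
  obtain N' where N: "N = Suc N'"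
  proof (cases N)
    case 0
    then have "a = 0" "\<forall>j. coeff p j = 0" using pCons(4)
      by (metis coeff_pCons_0 le0, metis coeff_pCons_Suc le0)
    then show ?thesis using pCons(1) by (simp add: poly_eq_iff)
  qed
  have c': "\<And>j. N' \<le> j \<Longrightarrow> coeff p j = 0" using pCons(4) N by (metis Suc_le_mono coeff_pCons_Suc)
  have Av: "A *\<^sub>v v \<in> carrier_vec n" using A pCons(3) by simp
  have one: "(a \<cdot>\<^sub>m 1\<^sub>m n) *\<^sub>v v = a \<cdot>\<^sub>v v"
    using pCons(3) by (intro eq_vecI) (auto simp: smult_scalar_prod_distrib[of _ n])
  have "(mat_eval (pCons a p) A *\<^sub>v v) $ k
      = ((a \<cdot>\<^sub>m 1\<^sub>m n) *\<^sub>v v + (mat_eval p A * A) *\<^sub>v v) $ k"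
    using A cp pCons(3)
    by (simp add: mat_eval_pCons mat_eval_commute[OF A] add_mult_distrib_mat_vec[of _ n n])
  also have "\<dots> = a * v $ k + (mat_eval p A *\<^sub>v (A *\<^sub>v v)) $ k"
    using A cp pCons(3) pCons(5) by (simp add: one)
  also have "\<dots> = a * v $ k + (\<Sum>j<N'. coeff p j * (A ^\<^sub>m j *\<^sub>v (A *\<^sub>v v)) $ k)"
    using pCons(2)[OF Av c' pCons(5)] by simp
  also have "\<dots> = (\<Sum>j<N. coeff (pCons a p) j * (A ^\<^sub>m j *\<^sub>v v) $ k)"
    unfolding N sum.lessThan_Suc_shift using A pCons(3)
    by (simp del: pow_mat.simps add: pow_mat.simps(1) pow_mat.simps(2)[of A] assoc_mult_mat_vec[of _ n n _ n])
  finally show ?case .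
qed

lemma is_min_poly_transpose:
  assumes A: "A \<in> carrier_mat n n"
  shows "is_min_poly K (transpose_mat A) f \<longleftrightarrow> is_min_poly K A f"
proof -
  have "mat_eval q (transpose_mat A) = 0\<^sub>m n n \<longleftrightarrow> mat_eval q A = 0\<^sub>m n n" for q
    unfolding mat_eval_transpose[OF A] by (metis transpose_transpose zero_transpose_mat)
  then show ?thesis using A unfolding is_min_poly_def by simp
qed

section \<open>Krylov matrices\<close>

lemma zero_mult_mat_vec [simp]: "v \<in> carrier_vec n \<Longrightarrow> 0\<^sub>m nr n *\<^sub>v v = 0\<^sub>v nr"
  by (intro eq_vecI) auto

definition krylov_mat :: "'a::comm_ring_1 mat \<Rightarrow> 'a vec \<Rightarrow> 'a mat" where
  "krylov_mat A v = mat (dim_row A) (dim_row A) (\<lambda>(i, j). (A ^\<^sub>m j *\<^sub>v v) $ i)"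

lemma krylov_mat_carrier: "A \<in> carrier_mat n n \<Longrightarrow> krylov_mat A v \<in> carrier_mat n n"
  unfolding krylov_mat_def by simp

lemma krylov_mat_mult_vec_index:
  assumes "A \<in> carrier_mat n n" and "k < n"
  shows "(krylov_mat A v *\<^sub>v vec n c) $ k = (\<Sum>j<n. c j * (A ^\<^sub>m j *\<^sub>v v) $ k)"
  using assms unfolding krylov_mat_def
  by (auto simp: scalar_prod_def lessThan_atLeast0 mult.commute intro!: sum.cong)

lemma mat_eval_mult_vec_krylov_mat:
  assumes A: "A \<in> carrier_mat n n" and v: "v \<in> carrier_vec n"
    and p: "\<And>j. n \<le> j \<Longrightarrow> coeff p j = 0"
  shows "mat_eval p A *\<^sub>v v = krylov_mat A v *\<^sub>v vec n (coeff p)"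
proof (rule eq_vecI)
  fix k assume "k < dim_vec (krylov_mat A v *\<^sub>v vec n (coeff p))"
  then have k: "k < n" using A by (simp add: krylov_mat_def)
  show "(mat_eval p A *\<^sub>v v) $ k = (krylov_mat A v *\<^sub>v vec n (coeff p)) $ k"
    by (simp only: krylov_mat_mult_vec_index[OF A k] mat_eval_mult_vec_index[OF A v p k])
qed (use A mat_eval_carrier[OF A, of p] in \<open>simp add: krylov_mat_def\<close>)

lemma finsum_vec_eq_krylov_mat_mult_vec:
  assumes A: "A \<in> carrier_mat n n" and v: "v \<in> carrier_vec n"
  shows "finsum_vec TYPE('a::field) n (\<lambda>i. c i \<cdot>\<^sub>v (A ^\<^sub>m i *\<^sub>v v)) {..<n} = krylov_mat A v *\<^sub>v vec n c"
proof -
  have F: "(\<lambda>i. c i \<cdot>\<^sub>v (A ^\<^sub>m i *\<^sub>v v)) \<in> {..<n} \<rightarrow> carrier_vec n"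
    using mult_mat_vec_carrier[OF pow_carrier_mat[OF A] v] by auto
  show ?thesis
  proof (rule eq_vecI)
    fix k assume "k < dim_vec (krylov_mat A v *\<^sub>v vec n c)"
    then have k: "k < n" using A by (simp add: krylov_mat_def)
    show "finsum_vec TYPE('a) n (\<lambda>i. c i \<cdot>\<^sub>v (A ^\<^sub>m i *\<^sub>v v)) {..<n} $ k
        = (krylov_mat A v *\<^sub>v vec n c) $ k"
      unfolding krylov_mat_mult_vec_index[OF A k] index_finsum_vec[OF _ k F, simplified]
      using k A v by (intro sum.cong refl) simp
  qed (use finsum_vec_closed[OF F] A in \<open>simp add: krylov_mat_def\<close>)
qed

lemma coeff_Poly_list_of_vec: "coeff (Poly (list_of_vec c)) j = (if j < dim_vec c then c $ j else 0)"
  by (simp add: nth_default_def list_of_vec_index)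

definition adj_inverse :: "'a::field mat \<Rightarrow> 'a mat" where
  "adj_inverse A = inverse (det A) \<cdot>\<^sub>m adj_mat A"

lemma adj_inverse:
  assumes A: "A \<in> carrier_mat n n" and det: "det A \<noteq> 0"
  shows "adj_inverse A \<in> carrier_mat n n" "A * adj_inverse A = 1\<^sub>m n" "adj_inverse A * A = 1\<^sub>m n"
proof -
  note adj = adj_mat[OF A]
  show B: "adj_inverse A \<in> carrier_mat n n" unfolding adj_inverse_def using adj by simp
  have "A * adj_inverse A = inverse (det A) \<cdot>\<^sub>m (A * adj_mat A)"
    unfolding adj_inverse_def by (rule mult_smult_distrib[OF A adj(1)])
  also have "\<dots> = 1\<^sub>m n" unfolding adj(2) using det by (intro eq_matI) auto
  finally show AB: "A * adj_inverse A = 1\<^sub>m n" .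
  show "adj_inverse A * A = 1\<^sub>m n" by (rule mat_mult_left_right_inverse[OF A B AB])
qed

lemma ex_mat_eval_mult_vec_eq:
  fixes A :: "'a::field mat"
  assumes A: "A \<in> carrier_mat n n" and v: "v \<in> carrier_vec n"
    and det: "det (krylov_mat A v) \<noteq> 0" and y: "y \<in> carrier_vec n"
  shows "\<exists>P. y = mat_eval P A *\<^sub>v v"
proof
  let ?V = "krylov_mat A v"
  define c where "c = adj_inverse ?V *\<^sub>v y"
  note inv = adj_inverse[OF krylov_mat_carrier[OF A] det]
  have c: "c \<in> carrier_vec n" unfolding c_def using inv(1) y by simp
  have "mat_eval (Poly (list_of_vec c)) A *\<^sub>v v = ?V *\<^sub>v c"
    using c by (subst mat_eval_mult_vec_krylov_mat[OF A v])
      (auto simp: coeff_Poly_list_of_vec simp del: coeff_Poly_eq intro!: arg_cong[where f = "(*\<^sub>v) ?V"])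
  also have "\<dots> = (?V * adj_inverse ?V) *\<^sub>v y"
    unfolding c_def using assoc_mult_mat_vec[OF krylov_mat_carrier[OF A] inv(1) y] ..
  also have "\<dots> = y" using inv(2) y by simp
  finally show "y = mat_eval (Poly (list_of_vec c)) A *\<^sub>v v" ..
qed

lemma mat_eval_eq_0_if_annihilates_cyclic:
  fixes A :: "'a::field mat"
  assumes A: "A \<in> carrier_mat n n" and v: "v \<in> carrier_vec n"
    and det: "det (krylov_mat A v) \<noteq> 0" and q: "mat_eval q A *\<^sub>v v = 0\<^sub>v n"
  shows "mat_eval q A = 0\<^sub>m n n"
proof (rule eq_matI)
  fix i j assume "i < dim_row (0\<^sub>m n n :: 'a mat)" "j < dim_col (0\<^sub>m n n :: 'a mat)"
  then have i: "i < n" and j: "j < n" by auto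
  obtain P where P: "unit_vec n j = mat_eval P A *\<^sub>v v"
    using ex_mat_eval_mult_vec_eq[OF A v det unit_vec_carrier] by blast
  have "mat_eval q A $$ (i, j) = (mat_eval q A *\<^sub>v unit_vec n j) $ i"
    using mat_eval_carrier[OF A, of q] i j by simp
  also have "\<dots> = (mat_eval P A *\<^sub>v (mat_eval q A *\<^sub>v v)) $ i"
    unfolding P mat_eval_mult_mult_vec[OF A v] by (simp add: mult.commute)
  also have "\<dots> = 0" using q i mat_eval_carrier[OF A, of P] by simp
  finally show "mat_eval q A $$ (i, j) = 0\<^sub>m n n $$ (i, j)" using i j by simp
qed (use mat_eval_carrier[OF A] in auto)

section \<open>Matrices over a subfield\<close>

lemma row_in_K_vecs: "K_mat K A \<Longrightarrow> i < dim_row A \<Longrightarrow> row A i \<in> K_vecs K (dim_col A)"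
  unfolding K_mat_def K_vecs_def by auto

lemma col_in_K_vecs: "K_mat K A \<Longrightarrow> j < dim_col A \<Longrightarrow> col A j \<in> K_vecs K (dim_row A)"
  unfolding K_mat_def K_vecs_def by auto

lemma K_mat_transpose: "K_mat K A \<Longrightarrow> K_mat K (transpose_mat A)"
  unfolding K_mat_def by auto

lemma cyclic_vector_krylov_mat:
  assumes A: "A \<in> carrier_mat n n"
  shows "cyclic_vector K A v \<longleftrightarrow> v \<in> K_vecs K n \<and>
    (\<forall>c. (\<forall>i<n. c i \<in> K) \<longrightarrow> krylov_mat A v *\<^sub>v vec n c = 0\<^sub>v n \<longrightarrow> (\<forall>i<n. c i = 0)) \<and>
    (\<forall>y\<in>K_vecs K n. \<exists>c. (\<forall>i<n. c i \<in> K) \<and> y = krylov_mat A v *\<^sub>v vec n c)"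
proof (cases "v \<in> carrier_vec n")
  case True
  then show ?thesis
    using A unfolding cyclic_vector_def by (simp add: finsum_vec_eq_krylov_mat_mult_vec[OF A True])
qed (use A in \<open>auto simp: cyclic_vector_def K_vecs_def\<close>)

context
  fixes K :: "'a::field set"
  assumes K: "subfield K"
begin

lemma subfield_zero: "0 \<in> K"
  and subfield_one: "1 \<in> K"
  and subfield_add: "x \<in> K \<Longrightarrow> y \<in> K \<Longrightarrow> x + y \<in> K"
  and subfield_mult: "x \<in> K \<Longrightarrow> y \<in> K \<Longrightarrow> x * y \<in> K"
  and subfield_uminus: "x \<in> K \<Longrightarrow> - x \<in> K"
  and subfield_inverse: "x \<in> K \<Longrightarrow> inverse x \<in> K"
  using K unfolding subfield_def by auto

lemma subfield_diff: "x \<in> K \<Longrightarrow> y \<in> K \<Longrightarrow> x - y \<in> K"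
  by (metis diff_conv_add_uminus subfield_add subfield_uminus)

lemma subfield_sum: "(\<And>i. i \<in> I \<Longrightarrow> f i \<in> K) \<Longrightarrow> sum f I \<in> K"
  by (induction I rule: infinite_finite_induct) (auto simp: subfield_zero subfield_add)

lemma subfield_prod: "(\<And>i. i \<in> I \<Longrightarrow> f i \<in> K) \<Longrightarrow> prod f I \<in> K"
  by (induction I rule: infinite_finite_induct) (auto simp: subfield_one subfield_mult)

lemma subfield_power: "x \<in> K \<Longrightarrow> x ^ k \<in> K"
  by (induction k) (auto simp: subfield_one subfield_mult)

lemma scalar_prod_in_subfield: "x \<in> K_vecs K n \<Longrightarrow> y \<in> K_vecs K n \<Longrightarrow> x \<bullet> y \<in> K"
  unfolding K_vecs_def scalar_prod_def by (auto intro!: subfield_sum subfield_mult)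

lemma mult_mat_vec_in_K_vecs:
  assumes KA: "K_mat K A" and A: "A \<in> carrier_mat nr nc" and x: "x \<in> K_vecs K nc"
  shows "A *\<^sub>v x \<in> K_vecs K nr"
proof -
  have "(A *\<^sub>v x) $ i \<in> K" if i: "i < nr" for i
  proof -
    have "row A i \<in> K_vecs K nc" using row_in_K_vecs[OF KA] A i by auto
    then show ?thesis using scalar_prod_in_subfield[OF _ x] A i by simp
  qed
  then show ?thesis using mult_mat_vec_carrier[OF A] x unfolding K_vecs_def by auto
qed

lemma K_mat_mult:
  assumes A: "K_mat K A" and B: "K_mat K B" and dim: "dim_col A = dim_row B"
  shows "K_mat K (A * B)"
  unfolding K_mat_def
proof (intro allI impI)
  fix i j assume ij: "i < dim_row (A * B)" "j < dim_col (A * B)"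
  have "row A i \<in> K_vecs K (dim_col A)" using row_in_K_vecs[OF A] ij by simp
  moreover have "col B j \<in> K_vecs K (dim_col A)" using col_in_K_vecs[OF B] ij dim by simp
  ultimately have "row A i \<bullet> col B j \<in> K" by (rule scalar_prod_in_subfield)
  then show "(A * B) $$ (i, j) \<in> K" using ij by simp
qed

lemma K_mat_pow:
  assumes "K_mat K A" and "A \<in> carrier_mat n n"
  shows "K_mat K (A ^\<^sub>m k)"
proof (induction k)
  case 0
  show ?case unfolding K_mat_def using subfield_zero subfield_one by auto
next
  case (Suc k)
  show ?case using K_mat_mult[OF Suc assms(1)] assms(2) by auto
qed

lemma det_in_subfield:
  assumes "K_mat K A"
  shows "det A \<in> K"
proof -
  have sign: "(of_int (sign p) :: 'a) \<in> K" for p :: "nat \<Rightarrow> nat"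
    using signof_pm_one[of p] subfield_one subfield_uminus[OF subfield_one] by (metis insertE empty_iff)
  show ?thesis
    using assms unfolding det_def K_mat_def
    by (auto intro!: subfield_sum subfield_mult sign subfield_prod simp: subfield_zero permutes_def)
qed

lemma K_mat_adj_inverse:
  assumes A: "K_mat K A"
  shows "K_mat K (adj_inverse A)"
proof -
  have minors: "K_mat K (mat_delete A i j)" for i j
    using A unfolding K_mat_def mat_delete_def by auto
  have adj: "K_mat K (adj_mat A)"
    unfolding K_mat_def[of K "adj_mat A"]
  proof (intro allI impI)
    fix i j assume "i < dim_row (adj_mat A)" "j < dim_col (adj_mat A)"
    then have "adj_mat A $$ (i, j) = (- 1) ^ (j + i) * det (mat_delete A j i)"
      by (simp add: adj_mat_def cofactor_def)
    also have "\<dots> \<in> K"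
      by (intro subfield_mult subfield_power subfield_uminus subfield_one det_in_subfield minors)
    finally show "adj_mat A $$ (i, j) \<in> K" .
  qed
  show ?thesis
    unfolding K_mat_def[of K "adj_inverse A"]
  proof (intro allI impI)
    fix i j assume ij: "i < dim_row (adj_inverse A)" "j < dim_col (adj_inverse A)"
    then have "adj_inverse A $$ (i, j) = inverse (det A) * adj_mat A $$ (i, j)"
      unfolding adj_inverse_def by simp
    also have "\<dots> \<in> K"
      using adj ij unfolding K_mat_def adj_inverse_def
      by (intro subfield_mult subfield_inverse det_in_subfield A) auto
    finally show "adj_inverse A $$ (i, j) \<in> K" .
  qed
qed

lemma K_mat_krylov_mat:
  assumes KA: "K_mat K A" and A: "A \<in> carrier_mat n n" and v: "v \<in> K_vecs K n"
  shows "K_mat K (krylov_mat A v)"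
proof -
  have "A ^\<^sub>m j *\<^sub>v v \<in> K_vecs K n" for j
    by (rule mult_mat_vec_in_K_vecs[OF K_mat_pow[OF KA A] pow_carrier_mat[OF A] v])
  then show ?thesis using A unfolding K_mat_def krylov_mat_def K_vecs_def by auto
qed

lemma det_krylov_mat_neq_0_if_cyclic:
  assumes A: "A \<in> carrier_mat n n" and cyclic: "cyclic_vector K A v"
  shows "det (krylov_mat A v) \<noteq> 0"
proof
  let ?V = "krylov_mat A v"
  have V: "?V \<in> carrier_mat n n" by (rule krylov_mat_carrier[OF A])
  have span: "\<And>y. y \<in> K_vecs K n \<Longrightarrow> \<exists>c. (\<forall>i<n. c i \<in> K) \<and> y = ?V *\<^sub>v vec n c"
    using cyclic unfolding cyclic_vector_krylov_mat[OF A] by auto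
  assume "det ?V = 0"
  then have "det (transpose_mat ?V) = 0" by (simp add: det_transpose[OF V])
  then obtain x where x: "x \<in> carrier_vec n" "x \<noteq> 0\<^sub>v n" "transpose_mat ?V *\<^sub>v x = 0\<^sub>v n"
    using det_0_iff_vec_prod_zero_field[OF transpose_carrier_mat[THEN iffD2, OF V]] by blast
  have "x $ k = 0" if k: "k < n" for k
  proof -
    have "unit_vec n k \<in> K_vecs K n"
      unfolding K_vecs_def by (auto simp: unit_vec_def subfield_zero subfield_one)
    then obtain c where c: "unit_vec n k = ?V *\<^sub>v vec n c" using span by blast
    have "x $ k = x \<bullet> unit_vec n k" using k by simp
    also have "\<dots> = (transpose_mat ?V *\<^sub>v x) \<bullet> vec n c"
      unfolding c by (rule transpose_vec_mult_scalar[OF V vec_carrier x(1), symmetric])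
    also have "\<dots> = 0" unfolding x(3) by simp
    finally show ?thesis .
  qed
  then have "x = 0\<^sub>v n" using x(1) by (intro eq_vecI) auto
  with x(2) show False ..
qed

lemma cyclic_vector_if_det_krylov_mat:
  assumes A: "A \<in> carrier_mat n n" and KA: "K_mat K A"
    and v: "v \<in> K_vecs K n" and det: "det (krylov_mat A v) \<noteq> 0"
  shows "cyclic_vector K A v"
proof -
  let ?V = "krylov_mat A v" and ?B = "adj_inverse (krylov_mat A v)"
  have V: "?V \<in> carrier_mat n n" by (rule krylov_mat_carrier[OF A])
  note inv = adj_inverse[OF V det]
  have indep: "\<forall>i<n. c i = 0" if c: "?V *\<^sub>v vec n c = 0\<^sub>v n" for c
  proof -
    have "\<not> (\<exists>x. x \<in> carrier_vec n \<and> x \<noteq> 0\<^sub>v n \<and> ?V *\<^sub>v x = 0\<^sub>v n)"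
      using det det_0_iff_vec_prod_zero_field[OF V] by simp
    then have "vec n c = 0\<^sub>v n" using c vec_carrier by blast
    then show ?thesis by (metis index_vec index_zero_vec(1))
  qed
  have span: "\<exists>c. (\<forall>i<n. c i \<in> K) \<and> y = ?V *\<^sub>v vec n c" if y: "y \<in> K_vecs K n" for y
  proof -
    define c where "c = ?B *\<^sub>v y"
    have "c \<in> K_vecs K n"
      unfolding c_def
      by (rule mult_mat_vec_in_K_vecs[OF K_mat_adj_inverse[OF K_mat_krylov_mat[OF KA A v]] inv(1) y])
    then have c: "c \<in> carrier_vec n" "\<forall>i<n. c $ i \<in> K" unfolding K_vecs_def by auto
    have "y = (?V * ?B) *\<^sub>v y" using inv(2) y unfolding K_vecs_def by simp
    also have "\<dots> = ?V *\<^sub>v c" unfolding c_def using V inv(1) y unfolding K_vecs_def by simp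
    also have "c = vec n (\<lambda>i. c $ i)" using c(1) by (intro eq_vecI) auto
    finally show ?thesis using c(2) by (intro exI[of _ "\<lambda>i. c $ i"]) simp
  qed
  show ?thesis unfolding cyclic_vector_krylov_mat[OF A] using v indep span by blast
qed

lemma cyclic_vector_iff_det_krylov_mat:
  assumes "A \<in> carrier_mat n n" and "K_mat K A"
  shows "cyclic_vector K A v \<longleftrightarrow> v \<in> K_vecs K n \<and> det (krylov_mat A v) \<noteq> 0"
proof
  assume cyclic: "cyclic_vector K A v"
  then have "v \<in> K_vecs K n" unfolding cyclic_vector_krylov_mat[OF assms(1)] by blast
  with det_krylov_mat_neq_0_if_cyclic[OF assms(1) cyclic]
  show "v \<in> K_vecs K n \<and> det (krylov_mat A v) \<noteq> 0" by blast
qed (use cyclic_vector_if_det_krylov_mat[OF assms] in blast)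

end

section \<open>The dual code\<close>

lemma cyclic_code_transpose_dual_code:
  assumes A: "A \<in> carrier_mat n n" and C: "cyclic_code A C"
  shows "cyclic_code (transpose_mat A) (dual_code n C)"
proof -
  have Cc: "C \<subseteq> carrier_vec n" and AC: "\<And>c. c \<in> C \<Longrightarrow> A *\<^sub>v c \<in> C"
    using C A unfolding cyclic_code_def by auto
  have "(x + y) \<bullet> c = 0" if "x \<in> dual_code n C" "y \<in> dual_code n C" "c \<in> C" for x y c
    using that Cc unfolding dual_code_def by (auto simp: add_scalar_prod_distrib)
  moreover have "(a \<cdot>\<^sub>v x) \<bullet> c = 0" if "x \<in> dual_code n C" "c \<in> C" for a x c
    using that Cc unfolding dual_code_def by auto
  moreover have "(transpose_mat A *\<^sub>v x) \<bullet> c = 0" if "x \<in> dual_code n C" "c \<in> C" for x c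
    using that Cc AC transpose_vec_mult_scalar[OF A] unfolding dual_code_def by auto
  ultimately show ?thesis using A Cc unfolding cyclic_code_def dual_code_def by auto
qed

lemma code_of_altdef:
  assumes "A \<in> carrier_mat n n" and "x \<in> carrier_vec n"
  shows "code_of A x g = {mat_eval (P * g) A *\<^sub>v x | P. True}"
  unfolding code_of_def mat_eval_mult_mult_vec[OF assms] ..

locale cyclic_matrix =
  fixes K :: "'a::field set" and M :: "'a mat" and n :: nat and v :: "'a vec"
  assumes subfield: "subfield K"
    and M_carrier: "M \<in> carrier_mat n n"
    and M_in_K: "K_mat K M"
    and v_cyclic: "cyclic_vector K M v"
begin

lemma v_in_K_vecs: "v \<in> K_vecs K n"
  and det_krylov_mat: "det (krylov_mat M v) \<noteq> 0"
  using v_cyclic unfolding cyclic_vector_iff_det_krylov_mat[OF subfield M_carrier M_in_K] by auto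

lemma v_carrier: "v \<in> carrier_vec n"
  using v_in_K_vecs unfolding K_vecs_def by auto

lemma M_transpose_carrier: "transpose_mat M \<in> carrier_mat n n"
  using M_carrier by simp

lemmas krylov_inverse = adj_inverse[OF krylov_mat_carrier[OF M_carrier] det_krylov_mat]

lemma mat_eval_min_poly: "is_min_poly K M f \<Longrightarrow> mat_eval f M = 0\<^sub>m n n"
  using M_carrier unfolding is_min_poly_def by auto

lemma degree_min_poly_le:
  assumes f: "is_min_poly K M f"
  shows "degree f \<le> n"
proof -
  have "M ^\<^sub>m n *\<^sub>v v \<in> K_vecs K n"
    by (rule mult_mat_vec_in_K_vecs[OF subfield K_mat_pow[OF subfield M_in_K M_carrier]
          pow_carrier_mat[OF M_carrier] v_in_K_vecs])
  then obtain c where c: "\<forall>i<n. c i \<in> K" "M ^\<^sub>m n *\<^sub>v v = krylov_mat M v *\<^sub>v vec n c"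
    using v_cyclic unfolding cyclic_vector_krylov_mat[OF M_carrier] by blast
  define q where "q = monom 1 n - (\<Sum>j<n. monom (c j) j)"
  have coeff_q: "coeff q i = (if i = n then 1 else 0) - (if i < n then c i else 0)" for i
    unfolding q_def by (simp add: coeff_sum)
  have "q \<noteq> 0" using coeff_q[of n] by auto
  moreover have "\<forall>i. coeff q i \<in> K"
    using c subfield_diff[OF subfield] subfield_zero[OF subfield] subfield_one[OF subfield]
    by (auto simp: coeff_q)
  moreover have "mat_eval q M = 0\<^sub>m n n"
  proof (rule mat_eval_eq_0_if_annihilates_cyclic[OF M_carrier v_carrier det_krylov_mat])
    show "mat_eval q M *\<^sub>v v = 0\<^sub>v n"
    proof (rule eq_vecI)
      fix k assume "k < dim_vec (0\<^sub>v n :: 'a vec)"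
      then have k: "k < n" by simp
      have "(mat_eval q M *\<^sub>v v) $ k = (\<Sum>j<Suc n. coeff q j * (M ^\<^sub>m j *\<^sub>v v) $ k)"
        by (rule mat_eval_mult_vec_index[OF M_carrier v_carrier _ k]) (auto simp: coeff_q)
      also have "\<dots> = (M ^\<^sub>m n *\<^sub>v v) $ k - (\<Sum>j<n. c j * (M ^\<^sub>m j *\<^sub>v v) $ k)"
        by (simp add: coeff_q sum_negf)
      also have "\<dots> = 0" using c(2) krylov_mat_mult_vec_index[OF M_carrier k, of v c] by simp
      finally show "(mat_eval q M *\<^sub>v v) $ k = 0\<^sub>v n $ k" using k by simp
    qed (use mat_eval_carrier[OF M_carrier, of q] in simp)
  qed
  ultimately have "degree f \<le> degree q" using f M_carrier unfolding is_min_poly_def by auto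
  also have "degree q \<le> n" by (rule degree_le) (auto simp: coeff_q)
  finally show ?thesis .
qed

definition dual_vector :: "'a vec" where
  "dual_vector = row (adj_inverse (krylov_mat M v)) (n - 1)"

lemma dual_vector_in_K_vecs: "dual_vector \<in> K_vecs K n"
  using krylov_inverse(1)
    K_mat_adj_inverse[OF subfield K_mat_krylov_mat[OF subfield M_in_K M_carrier v_in_K_vecs]]
  unfolding dual_vector_def K_vecs_def K_mat_def by auto

lemma dual_vector_carrier: "dual_vector \<in> carrier_vec n"
  using dual_vector_in_K_vecs unfolding K_vecs_def by auto

lemma scalar_prod_dual_vector:
  assumes n: "0 < n" and P: "\<And>j. n \<le> j \<Longrightarrow> coeff P j = 0"
  shows "dual_vector \<bullet> (mat_eval P M *\<^sub>v v) = coeff P (n - 1)"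
proof -
  let ?V = "krylov_mat M v"
  have "dual_vector \<bullet> (mat_eval P M *\<^sub>v v) = (adj_inverse ?V *\<^sub>v (?V *\<^sub>v vec n (coeff P))) $ (n - 1)"
    using n krylov_inverse(1) mat_eval_mult_vec_krylov_mat[OF M_carrier v_carrier P]
    unfolding dual_vector_def by simp
  also have "\<dots> = ((adj_inverse ?V * ?V) *\<^sub>v vec n (coeff P)) $ (n - 1)"
    by (subst assoc_mult_mat_vec[OF krylov_inverse(1) krylov_mat_carrier[OF M_carrier] vec_carrier]) (rule refl)
  also have "\<dots> = coeff P (n - 1)" using n krylov_inverse(3) by simp
  finally show ?thesis .
qed

lemma ex_scalar_prod_dual_vector_neq_0:
  assumes P: "P \<noteq> 0" "degree P < n"
  shows "\<exists>Q. dual_vector \<bullet> (mat_eval (P * Q) M *\<^sub>v v) \<noteq> 0"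
proof -
  define Q where "Q = monom (1::'a) (n - 1 - degree P)"
  have "Q \<noteq> 0" and "degree Q = n - 1 - degree P" and lead_Q: "lead_coeff Q = 1"
    unfolding Q_def by (simp, rule degree_monom_eq, simp, rule lead_coeff_monom)
  then have deg: "degree (P * Q) = n - 1"
    using P by (simp add: degree_mult_eq)
  have "dual_vector \<bullet> (mat_eval (P * Q) M *\<^sub>v v) = coeff (P * Q) (n - 1)"
    using P(2) deg by (intro scalar_prod_dual_vector) (auto intro: coeff_eq_0)
  also have "\<dots> = lead_coeff (P * Q)" using deg by simp
  also have "\<dots> = lead_coeff P" by (simp add: lead_coeff_mult lead_Q)
  finally have "dual_vector \<bullet> (mat_eval (P * Q) M *\<^sub>v v) \<noteq> 0" using P(1) by simp
  then show ?thesis by blast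
qed

lemma min_poly_dvdI:
  assumes f: "is_min_poly K M f"
    and S: "\<And>Q. dual_vector \<bullet> (mat_eval (S * Q) M *\<^sub>v v) = 0"
  shows "f dvd S"
proof (rule ccontr)
  assume "\<not> f dvd S"
  then have r: "S mod f \<noteq> 0" by (simp add: mod_eq_0_iff_dvd)
  have "f \<noteq> 0" using f unfolding is_min_poly_def by auto
  then have "degree (S mod f) < n"
    using degree_mod_less'[OF _ r] degree_min_poly_le[OF f] by (meson order_less_le_trans)
  then obtain Q where Q: "dual_vector \<bullet> (mat_eval (S mod f * Q) M *\<^sub>v v) \<noteq> 0"
    using ex_scalar_prod_dual_vector_neq_0[OF r] by blast
  have "mat_eval (S mod f * Q) M = mat_eval (S * Q) M"
    using mat_eval_mod[OF M_carrier mat_eval_min_poly[OF f]] by (metis mod_mult_left_eq)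
  with Q S show False by simp
qed

lemma scalar_prod_transpose_dual_vector:
  "(mat_eval P (transpose_mat M) *\<^sub>v dual_vector) \<bullet> (mat_eval Q M *\<^sub>v v)
    = dual_vector \<bullet> (mat_eval (P * Q) M *\<^sub>v v)"
  by (simp add: scalar_prod_mat_eval_transpose[OF M_carrier _ dual_vector_carrier]
      mat_eval_mult_mult_vec[OF M_carrier v_carrier]
      mult_mat_vec_carrier[OF mat_eval_carrier[OF M_carrier] v_carrier])

lemma det_krylov_mat_transpose: "det (krylov_mat (transpose_mat M) dual_vector) \<noteq> 0"
proof
  let ?W = "krylov_mat (transpose_mat M) dual_vector"
  assume "det ?W = 0"
  then obtain c where c: "c \<in> carrier_vec n" "c \<noteq> 0\<^sub>v n" "?W *\<^sub>v c = 0\<^sub>v n"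
    using det_0_iff_vec_prod_zero_field[OF krylov_mat_carrier[OF M_transpose_carrier]] by blast
  define P where "P = Poly (list_of_vec c)"
  have coeff_P: "coeff P j = (if j < n then c $ j else 0)" for j
    unfolding P_def coeff_Poly_list_of_vec using c(1) by simp
  have vec_P: "vec n (coeff P) = c" using c(1) by (intro eq_vecI) (auto simp: coeff_P)
  have "P \<noteq> 0"
  proof
    assume "P = 0"
    then have "c = 0\<^sub>v n" using vec_P by auto
    with c(2) show False ..
  qed
  moreover have "degree P < n"
    using \<open>P \<noteq> 0\<close> by (intro degree_lessI) (auto simp: coeff_P)
  moreover have "dual_vector \<bullet> (mat_eval (P * Q) M *\<^sub>v v) = 0" for Q
  proof -
    have "mat_eval P (transpose_mat M) *\<^sub>v dual_vector = 0\<^sub>v n"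
      using mat_eval_mult_vec_krylov_mat[OF M_transpose_carrier dual_vector_carrier, of P] c(3)
      by (simp add: coeff_P vec_P)
    then show ?thesis
      using scalar_prod_transpose_dual_vector[of P Q]
        mult_mat_vec_carrier[OF mat_eval_carrier[OF M_carrier] v_carrier] by simp
  qed
  ultimately show False using ex_scalar_prod_dual_vector_neq_0 by blast
qed

lemma transpose_cyclic_vector: "cyclic_vector K (transpose_mat M) dual_vector"
  unfolding cyclic_vector_iff_det_krylov_mat[OF subfield M_transpose_carrier K_mat_transpose[OF M_in_K]]
  using dual_vector_in_K_vecs det_krylov_mat_transpose by blast

lemma transpose_dual_vector_in_dual_code_iff:
  assumes f: "is_min_poly K M f"
  shows "mat_eval P (transpose_mat M) *\<^sub>v dual_vector \<in> dual_code n (code_of M v g)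
    \<longleftrightarrow> f dvd P * g"
proof -
  let ?y = "mat_eval P (transpose_mat M) *\<^sub>v dual_vector"
  have "?y \<in> dual_code n (code_of M v g) \<longleftrightarrow> (\<forall>Q. ?y \<bullet> (mat_eval (Q * g) M *\<^sub>v v) = 0)"
    unfolding dual_code_def code_of_altdef[OF M_carrier v_carrier]
    using mult_mat_vec_carrier[OF mat_eval_carrier[OF M_transpose_carrier] dual_vector_carrier]
    by blast
  also have "\<dots> \<longleftrightarrow> (\<forall>Q. dual_vector \<bullet> (mat_eval (P * g * Q) M *\<^sub>v v) = 0)"
    unfolding scalar_prod_transpose_dual_vector by (simp only: ac_simps)
  also have "\<dots> \<longleftrightarrow> f dvd P * g"
  proof
    assume "\<forall>Q. dual_vector \<bullet> (mat_eval (P * g * Q) M *\<^sub>v v) = 0"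
    then show "f dvd P * g" by (intro min_poly_dvdI[OF f]) blast
  next
    assume "f dvd P * g"
    then obtain R where R: "P * g = f * R" ..
    have "mat_eval (P * g * Q) M = 0\<^sub>m n n" for Q
    proof -
      have "mat_eval (P * g * Q) M = mat_eval f M * mat_eval (R * Q) M"
        unfolding R mult.assoc by (rule mat_eval_mult[OF M_carrier])
      also have "\<dots> = 0\<^sub>m n n"
        unfolding mat_eval_min_poly[OF f] by (rule left_mult_zero_mat[OF mat_eval_carrier[OF M_carrier]])
      finally show ?thesis .
    qed
    then show "\<forall>Q. dual_vector \<bullet> (mat_eval (P * g * Q) M *\<^sub>v v) = 0"
      using v_carrier dual_vector_carrier by simp
  qed
  finally show ?thesis .
qed

lemma dual_code_of:
  assumes f: "is_min_poly K M f" and fgh: "f = g * h" and g: "g \<noteq> 0"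
  shows "dual_code n (code_of M v g) = code_of (transpose_mat M) dual_vector h"
proof (rule equalityI; rule subsetI)
  fix y assume y: "y \<in> dual_code n (code_of M v g)"
  then have "y \<in> carrier_vec n" unfolding dual_code_def by simp
  then obtain P where P: "y = mat_eval P (transpose_mat M) *\<^sub>v dual_vector"
    using ex_mat_eval_mult_vec_eq[OF M_transpose_carrier dual_vector_carrier det_krylov_mat_transpose]
    by blast
  with y have "g * h dvd P * g"
    using transpose_dual_vector_in_dual_code_iff[OF f] by (simp add: fgh)
  then have "h dvd P" using g by (simp add: mult.commute[of P])
  then obtain R where "P = h * R" ..
  then have "y = mat_eval (R * h) (transpose_mat M) *\<^sub>v dual_vector" using P by (simp add: mult.commute)
  then show "y \<in> code_of (transpose_mat M) dual_vector h"
    unfolding code_of_altdef[OF M_transpose_carrier dual_vector_carrier] by blast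
next
  fix y assume "y \<in> code_of (transpose_mat M) dual_vector h"
  then obtain P where "y = mat_eval (P * h) (transpose_mat M) *\<^sub>v dual_vector"
    unfolding code_of_altdef[OF M_transpose_carrier dual_vector_carrier] by blast
  moreover have "f dvd P * h * g" unfolding fgh by simp
  ultimately show "y \<in> dual_code n (code_of M v g)"
    using transpose_dual_vector_in_dual_code_iff[OF f] by simp
qed

end

theorem proposition4:
  fixes K :: "'a::field set" and M :: "'a mat" and f g h :: "'a poly"
    and C :: "'a vec set" and n m :: nat
  assumes "subfield K" and "ext_degree K m" and "m \<ge> n"
    and "M \<in> carrier_mat n n" and "K_mat K M"
    and "cyclic_mat K M" and "is_min_poly K M f"
    and "cyclic_code M C" and "is_gen_poly K M f C g"
    and "f = g * h"
  shows "cyclic_mat K (transpose_mat M) \<and> is_min_poly K (transpose_mat M) f \<and>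
         cyclic_code (transpose_mat M) (dual_code n C) \<and>
         is_gen_poly K (transpose_mat M) f (dual_code n C) h"
proof -
  obtain v where v: "cyclic_vector K M v" and C: "C = code_of M v g" and g: "lead_coeff g = 1"
    using assms(9) unfolding is_gen_poly_def by blast
  interpret cyclic_matrix K M n v using assms(1,4,5) v by unfold_locales
  have "lead_coeff h = 1"
    using assms(7,10) g unfolding is_min_poly_def by (simp add: lead_coeff_mult)
  moreover have "g \<noteq> 0" using g by auto
  ultimately have "is_gen_poly K (transpose_mat M) f (dual_code n C) h"
    unfolding is_gen_poly_def C using transpose_cyclic_vector dual_code_of[OF assms(7,10)] assms(10)
    by auto
  then show ?thesis
    using transpose_cyclic_vector is_min_poly_transpose[OF assms(4)] assms(7)
      cyclic_code_transpose_dual_code[OF assms(4,8)]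
    unfolding cyclic_mat_def by blast
qed

end
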